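(* Let $A$ be a closed symmetric relation in $\mathfrak H$, let $\{\mathcal H,\Gamma_0,\Gamma_1\}$ be an AB-generalized boundary triple for $A^*$ with $A_0=\ker\Gamma_0$, Weyl function $M(\cdot)$ and $\gamma$-field $\gamma(\cdot)$. Let $A_\Theta$ be a linear relation with $A\subset A_\Theta\subset\operatorname{dom}\Gamma$ and put $\Theta=\Gamma(A_\Theta)=\{\{\Gamma_0\hat f,\Gamma_1\hat f\}:\hat f\in A_\Theta\}$. Then for every $\lambda\in\rho(A_0)$ $(A_\Theta-\lambda)^{-1}=(A_0-\lambda)^{-1}+\gamma(\lambda)(\Theta-M(\lambda))^{-1}\gamma(\bar\lambda)^*$, where all inverses, sums and products are understood in the sense of linear relations (in particular $A_\Theta$ need not be closed and $\lambda$ need not belong to $\rho(A_\Theta)$).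
   Context: Linear relations: subspaces of product spaces; inverse $T^{-1}=\{\{g,f\}:\{f,g\}\in T\}$; sum $T_1+T_2=\{\{f,g+k\}:\{f,g\}\in T_1,\{f,k\}\in T_2\}$; product $ST=\{\{f,h\}:\exists g,\{f,g\}\in T,\{g,h\}\in S\}$. An AB-generalized boundary triple for $A^*$ is a single-valued linear operator $\Gamma=\{\Gamma_0,\Gamma_1\}:\mathfrak H^2\supset\operatorname{dom}\Gamma\to\mathcal H^2$ with $\operatorname{dom}\Gamma\subset A^*$ dense in $A^*$, satisfying Green's identity $(f',g)-(f,g')=(\Gamma_1\hat f,\Gamma_0\hat g)-(\Gamma_0\hat f,\Gamma_1\hat g)$ for $\hat f=\{f,f'\},\hat g=\{g,g'\}\in\operatorname{dom}\Gamma$, with $\operatorname{ran}\Gamma_0$ dense in $\mathcal H$ and $A_0=\ker\Gamma_0$ selfadjoint. Weyl function and $\gamma$-field: $M(\lambda)\Gamma_0\hat f_\lambda=\Gamma_1\hat f_\lambda$, $\gamma(\lambda)\Gamma_0\hat f_\lambda=f_\lambda$ for $\hat f_\lambda=\{f_\lambda,\lambda f_\lambda\}\in\operatorname{dom}\Gamma$; $\gamma(\bar\lambda)^*$ is the Hilbert space adjoint (a bounded everywhere defined operator $\mathfrak H\to\mathcal H$). *)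

theory Defs
  imports "HOL-Analysis.Analysis"
begin

class complex_hilbert = banach +
  fixes scaleC :: "complex \<Rightarrow> 'a \<Rightarrow> 'a" (infixr "*\<^sub>C" 75)
    and cinner :: "'a \<Rightarrow> 'a \<Rightarrow> complex"
  assumes scaleC_add_right: "a *\<^sub>C (x + y) = a *\<^sub>C x + a *\<^sub>C y"
    and scaleC_add_left: "(a + b) *\<^sub>C x = a *\<^sub>C x + b *\<^sub>C x"
    and scaleC_scaleC: "a *\<^sub>C (b *\<^sub>C x) = (a * b) *\<^sub>C x"
    and scaleC_one: "1 *\<^sub>C x = x"
    and scaleR_scaleC: "scaleR r x = complex_of_real r *\<^sub>C x"
    and cinner_add_left: "cinner (x + y) z = cinner x z + cinner y z"
    and cinner_scaleC_left: "cinner (a *\<^sub>C x) y = a * cinner x y"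
    and cinner_commute: "cinner x y = cnj (cinner y x)"
    and norm_cinner: "norm x = sqrt (Re (cinner x x))"

definition lin_rel :: "('a::complex_hilbert \<times> 'b::complex_hilbert) set \<Rightarrow> bool" where
  "lin_rel T \<longleftrightarrow> (0, 0) \<in> T
     \<and> (\<forall>f g f' g'. (f, g) \<in> T \<longrightarrow> (f', g') \<in> T \<longrightarrow> (f + f', g + g') \<in> T)
     \<and> (\<forall>c f g. (f, g) \<in> T \<longrightarrow> (c *\<^sub>C f, c *\<^sub>C g) \<in> T)"

definition rel_adj :: "('a::complex_hilbert \<times> 'b::complex_hilbert) set \<Rightarrow> ('b \<times> 'a) set" where
  "rel_adj T = {(f, f'). \<forall>g g'. (g, g') \<in> T \<longrightarrow> cinner f' g = cinner f g'}"

definition rel_inv :: "('a \<times> 'b) set \<Rightarrow> ('b \<times> 'a) set" where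
  "rel_inv T = {(g, f). (f, g) \<in> T}"

definition lrel_sum :: "('a \<times> 'b::ab_group_add) set \<Rightarrow> ('a \<times> 'b) set \<Rightarrow> ('a \<times> 'b) set" where
  "lrel_sum T1 T2 = {(f, g + k) | f g k. (f, g) \<in> T1 \<and> (f, k) \<in> T2}"

definition rel_diff :: "('a \<times> 'b::ab_group_add) set \<Rightarrow> ('a \<times> 'b) set \<Rightarrow> ('a \<times> 'b) set" where
  "rel_diff T1 T2 = {(f, g - k) | f g k. (f, g) \<in> T1 \<and> (f, k) \<in> T2}"

definition rel_mult :: "('b \<times> 'c) set \<Rightarrow> ('a \<times> 'b) set \<Rightarrow> ('a \<times> 'c) set" where
  "rel_mult S T = {(f, h). \<exists>g. (f, g) \<in> T \<and> (g, h) \<in> S}"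

definition rel_shift :: "('a::complex_hilbert \<times> 'a) set \<Rightarrow> complex \<Rightarrow> ('a \<times> 'a) set" where
  "rel_shift T z = {(f, g - z *\<^sub>C f) | f g. (f, g) \<in> T}"

definition symmetric_rel :: "('a::complex_hilbert \<times> 'a) set \<Rightarrow> bool" where
  "symmetric_rel A \<longleftrightarrow> A \<subseteq> rel_adj A"

definition selfadjoint_rel :: "('a::complex_hilbert \<times> 'a) set \<Rightarrow> bool" where
  "selfadjoint_rel A \<longleftrightarrow> A = rel_adj A"

definition resolvent_set :: "('a::complex_hilbert \<times> 'a) set \<Rightarrow> complex set" where
  "resolvent_set T = {z. \<exists>B. rel_inv (rel_shift T z) = {(x, B x) | x. True}
       \<and> bounded_linear B \<and> (\<forall>c x. B (c *\<^sub>C x) = c *\<^sub>C B x)}"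

text \<open>The boundary map \<Gamma> = {\<Gamma>0, \<Gamma>1} is given by two functions G0, G1 on the
  domain D = dom \<Gamma> (a subspace of the product space).\<close>
definition AB_gen_boundary_triple ::
  "('h::complex_hilbert \<times> 'h) set \<Rightarrow> ('h \<times> 'h) set \<Rightarrow> ('h \<times> 'h \<Rightarrow> 'k::complex_hilbert)
     \<Rightarrow> ('h \<times> 'h \<Rightarrow> 'k) \<Rightarrow> bool" where
  "AB_gen_boundary_triple A D G0 G1 \<longleftrightarrow>
     lin_rel D \<and> D \<subseteq> rel_adj A \<and> rel_adj A \<subseteq> closure D
   \<and> (\<forall>f g f' g'. (f, g) \<in> D \<longrightarrow> (f', g') \<in> D \<longrightarrow>
        G0 (f + f', g + g') = G0 (f, g) + G0 (f', g') \<and>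
        G1 (f + f', g + g') = G1 (f, g) + G1 (f', g'))
   \<and> (\<forall>c f g. (f, g) \<in> D \<longrightarrow>
        G0 (c *\<^sub>C f, c *\<^sub>C g) = c *\<^sub>C G0 (f, g) \<and>
        G1 (c *\<^sub>C f, c *\<^sub>C g) = c *\<^sub>C G1 (f, g))
   \<and> (\<forall>f f' g g'. (f, f') \<in> D \<longrightarrow> (g, g') \<in> D \<longrightarrow>
        cinner f' g - cinner f g' =
        cinner (G1 (f, f')) (G0 (g, g')) - cinner (G0 (f, f')) (G1 (g, g')))
   \<and> closure (G0 ` D) = UNIV
   \<and> selfadjoint_rel {fh \<in> D. G0 fh = 0}"

definition weyl_fun :: "('h::complex_hilbert \<times> 'h) set \<Rightarrow> ('h \<times> 'h \<Rightarrow> 'k::complex_hilbert)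
     \<Rightarrow> ('h \<times> 'h \<Rightarrow> 'k) \<Rightarrow> complex \<Rightarrow> ('k \<times> 'k) set" where
  "weyl_fun D G0 G1 z = {(G0 (f, z *\<^sub>C f), G1 (f, z *\<^sub>C f)) | f. (f, z *\<^sub>C f) \<in> D}"

definition gamma_field :: "('h::complex_hilbert \<times> 'h) set \<Rightarrow> ('h \<times> 'h \<Rightarrow> 'k::complex_hilbert)
     \<Rightarrow> complex \<Rightarrow> ('k \<times> 'h) set" where
  "gamma_field D G0 z = {(G0 (f, z *\<^sub>C f), f) | f. (f, z *\<^sub>C f) \<in> D}"

end

theory Submission
  imports Defs
begin

text \<open>
  Let R be the resolvent of A0 at z. Green's identity with an element of ker Gamma0
  shows that the adjoint of the gamma-field at the conjugate point is the operator
  Gamma1 R; it is single-valued because ran Gamma0 is dense. For f in A_Theta and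
  h = f' - z f, the difference between f and the element {R h, h + z R h} of A0 lies
  in the defect space at z, and its boundary values say precisely that {h, f} belongs
  to the right-hand side. Conversely, the data on the right-hand side produce an
  element of ker Gamma, which is Green-orthogonal to the dense set dom Gamma of A*,
  hence lies in A** = A, and therefore in A_Theta.
\<close>

section \<open>Complex inner products\<close>

lemma scaleC_minus1_left: "(-1::complex) *\<^sub>C (x::'a::complex_hilbert) = - x"
  by (metis of_real_1 of_real_minus scaleR_minus1_left scaleR_scaleC)

lemma scaleC_minus_right: "c *\<^sub>C (- x::'a::complex_hilbert) = - (c *\<^sub>C x)"
  by (metis scaleC_minus1_left scaleC_scaleC mult.commute)

lemma scaleC_diff_right: "c *\<^sub>C (x - y::'a::complex_hilbert) = c *\<^sub>C x - c *\<^sub>C y"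
  by (metis diff_conv_add_uminus scaleC_add_right scaleC_minus_right)

lemma cinner_zero_left [simp]: "cinner (0::'a::complex_hilbert) y = 0"
  by (metis add_0 add_cancel_right_left cinner_add_left)

lemma cinner_minus_left: "cinner (- x::'a::complex_hilbert) y = - cinner x y"
  by (metis scaleC_minus1_left cinner_scaleC_left mult_minus1)

lemma cinner_diff_left: "cinner (x - x'::'a::complex_hilbert) y = cinner x y - cinner x' y"
  by (metis diff_conv_add_uminus cinner_add_left cinner_minus_left)

lemma cinner_add_right: "cinner (x::'a::complex_hilbert) (y + y') = cinner x y + cinner x y'"
  by (metis cinner_add_left cinner_commute complex_cnj_add)

lemma cinner_scaleC_right: "cinner (x::'a::complex_hilbert) (a *\<^sub>C y) = cnj a * cinner x y"
  by (metis cinner_scaleC_left cinner_commute complex_cnj_mult)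

lemma cinner_zero_right [simp]: "cinner (x::'a::complex_hilbert) 0 = 0"
  by (metis cinner_commute cinner_zero_left complex_cnj_zero)

lemma cinner_minus_right: "cinner (x::'a::complex_hilbert) (- y) = - cinner x y"
  by (metis cinner_commute cinner_minus_left complex_cnj_minus)

lemma cinner_diff_right: "cinner (x::'a::complex_hilbert) (y - y') = cinner x y - cinner x y'"
  by (metis cinner_commute cinner_diff_left complex_cnj_diff)

lemma cinner_scaleR_left: "cinner (r *\<^sub>R x::'a::complex_hilbert) y = of_real r * cinner x y"
  by (simp add: scaleR_scaleC cinner_scaleC_left)

lemma cinner_scaleR_right: "cinner (x::'a::complex_hilbert) (r *\<^sub>R y) = of_real r * cinner x y"
  by (simp add: scaleR_scaleC cinner_scaleC_right)

lemmas cinner_simps = cinner_add_left cinner_add_right cinner_diff_left cinner_diff_right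
  cinner_scaleC_left cinner_scaleC_right

lemma cinner_self: "cinner (x::'a::complex_hilbert) x = of_real ((norm x)\<^sup>2)"
proof -
  have "Im (cinner x x) = 0"
    using cinner_commute[of x x] by (metis cnj.sel(2) equal_neg_zero)
  moreover have "Re (cinner x x) = (norm x)\<^sup>2"
    using norm_cinner[of x] by (metis norm_ge_zero real_sqrt_ge_0_iff real_sqrt_pow2)
  ultimately show ?thesis by (simp add: complex_eq_iff)
qed

lemma cinner_self_eq_0 [simp]: "cinner (x::'a::complex_hilbert) x = 0 \<longleftrightarrow> x = 0"
  by (simp add: cinner_self)

lemma norm_diff_component_sq:
  fixes r m :: "'a::complex_hilbert"
  assumes "m \<noteq> 0"
  shows "(norm (r - (cinner r m / of_real ((norm m)\<^sup>2)) *\<^sub>C m))\<^sup>2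
    = (norm r)\<^sup>2 - (cmod (cinner r m))\<^sup>2 / (norm m)\<^sup>2"
proof -
  define N where "N = (norm m)\<^sup>2"
  define c where "c = cinner r m"
  define t where "t = c / of_real N"
  have N: "N > 0" using assms by (simp add: N_def)
  have "cinner (r - t *\<^sub>C m) (r - t *\<^sub>C m)
      = cinner r r - cnj t * c - t * cnj c + t * cnj t * of_real N"
    by (simp add: cinner_simps cinner_self[of m] cinner_commute[of m r]
        flip: c_def N_def) (simp add: algebra_simps)
  also have "\<dots> = cinner r r - c * cnj c / of_real N"
    using N by (simp add: t_def field_simps)
  finally have "of_real ((norm (r - t *\<^sub>C m))\<^sup>2) = (of_real ((norm r)\<^sup>2 - (cmod c)\<^sup>2 / N) :: complex)"
    by (simp add: cinner_self flip: complex_norm_square)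
  then show ?thesis by (simp only: of_real_eq_iff t_def c_def N_def)
qed

lemma cinner_Cauchy_Schwarz: "cmod (cinner (x::'a::complex_hilbert) y) \<le> norm x * norm y"
proof (cases "y = 0")
  case False
  have "(cmod (cinner x y))\<^sup>2 / (norm y)\<^sup>2 \<le> (norm x)\<^sup>2"
    using norm_diff_component_sq[OF False, of x] by (smt (verit) zero_le_power2)
  then have "(cmod (cinner x y))\<^sup>2 \<le> (norm x * norm y)\<^sup>2"
    using False by (simp add: divide_le_eq power_mult_distrib)
  then show ?thesis by (rule power2_le_imp_le) simp
qed simp

lemma bounded_linear_cinner_left: "bounded_linear (\<lambda>x::'a::complex_hilbert. cinner x y)"
  by (rule bounded_linear_intro[where K="norm y"])
    (auto simp: cinner_add_left cinner_scaleR_left scaleR_conv_of_real cinner_Cauchy_Schwarz)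

lemma bounded_linear_cinner_right: "bounded_linear (\<lambda>y::'a::complex_hilbert. cinner x y)"
proof (rule bounded_linear_intro[where K="norm x"])
  show "cmod (cinner x y) \<le> norm y * norm x" for y
    using cinner_Cauchy_Schwarz[of y x] cinner_commute[of x y] by (simp add: mult.commute)
qed (auto simp: cinner_add_right cinner_scaleR_right scaleR_conv_of_real)

lemma cinner_eq_0_if_dense:
  fixes v :: "'a::complex_hilbert"
  assumes "closure S = UNIV" and "\<And>w. w \<in> S \<Longrightarrow> cinner v w = 0"
  shows "v = 0"
proof -
  have "closed {w. cinner v w = 0}"
    by (intro closed_Collect_eq linear_continuous_on bounded_linear_cinner_right continuous_on_const)
  then have "closure S \<subseteq> {w. cinner v w = 0}"
    using assms(2) by (intro closure_minimal) auto
  then have "cinner v v = 0" using assms(1) by blast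
  then show ?thesis by simp
qed

lemma parallelogram_law:
  "(norm (x + y::'a::complex_hilbert))\<^sup>2 + (norm (x - y))\<^sup>2 = 2 * (norm x)\<^sup>2 + 2 * (norm y)\<^sup>2"
proof -
  have "cinner (x + y) (x + y) + cinner (x - y) (x - y) = 2 * cinner x x + 2 * cinner y y"
    by (simp add: cinner_simps)
  then have "complex_of_real ((norm (x + y))\<^sup>2 + (norm (x - y))\<^sup>2)
      = of_real (2 * (norm x)\<^sup>2 + 2 * (norm y)\<^sup>2)"
    by (simp only: cinner_self of_real_add of_real_mult of_real_numeral)
  then show ?thesis by (simp only: of_real_eq_iff)
qed

section \<open>Best approximation and the Riesz representation\<close>

lemma Cauchy_if_dist_sq_le:
  fixes m :: "nat \<Rightarrow> 'a::metric_space"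
  assumes "a \<longlonglongrightarrow> 0" and "\<And>i j. (dist (m i) (m j))\<^sup>2 \<le> a i + a j"
  shows "Cauchy m"
proof (rule metric_CauchyI)
  fix e :: real assume "e > 0"
  then have "eventually (\<lambda>n. a n < e\<^sup>2 / 2) sequentially"
    using order_tendstoD(2)[OF assms(1), of "e\<^sup>2 / 2"] by simp
  then obtain N where N: "\<And>n. n \<ge> N \<Longrightarrow> a n < e\<^sup>2 / 2"
    by (auto simp: eventually_sequentially)
  have "dist (m i) (m j) < e" if "i \<ge> N" "j \<ge> N" for i j
  proof (rule power_less_imp_less_base)
    show "(dist (m i) (m j))\<^sup>2 < e\<^sup>2"
      using assms(2)[of i j] N[OF that(1)] N[OF that(2)] by linarith
  qed (use \<open>e > 0\<close> in simp)
  then show "\<exists>M. \<forall>i\<ge>M. \<forall>j\<ge>M. dist (m i) (m j) < e" by blast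
qed

lemma norm_diff_sq_le_midpoint:
  fixes x m m' :: "'a::complex_hilbert"
  assumes "d \<le> norm (x - (1/2) *\<^sub>R (m + m'))" and "0 \<le> d"
  shows "(norm (m - m'))\<^sup>2 \<le> 2 * (norm (x - m))\<^sup>2 + 2 * (norm (x - m'))\<^sup>2 - 4 * d\<^sup>2"
proof -
  have "(x - m) + (x - m') = 2 *\<^sub>R (x - (1/2) *\<^sub>R (m + m'))"
    by (simp add: algebra_simps scaleR_2)
  then have "2 * d \<le> norm ((x - m) + (x - m'))" using assms(1) by simp
  then have "(2 * d)\<^sup>2 \<le> (norm ((x - m) + (x - m')))\<^sup>2"
    using assms(2) by (intro power_mono) simp_all
  moreover have "norm ((x - m) - (x - m')) = norm (m - m')"
    by (simp add: norm_minus_commute)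
  ultimately show ?thesis
    using parallelogram_law[of "x - m" "x - m'"] by (simp add: power_mult_distrib)
qed

lemma closest_point_exists:
  fixes M :: "'a::complex_hilbert set"
  assumes "closed M" and "convex M" and "M \<noteq> {}"
  obtains p where "p \<in> M" and "\<And>m. m \<in> M \<Longrightarrow> norm (x - p) \<le> norm (x - m)"
proof -
  define d where "d = infdist x M"
  have "d \<ge> 0" by (simp add: d_def infdist_nonneg)
  have d_le: "d \<le> norm (x - m)" if "m \<in> M" for m
    using infdist_le[OF that, of x] by (simp add: d_def dist_norm)
  have "d \<in> closure (dist x ` M)"
    unfolding d_def infdist_notempty[OF assms(3)] using assms(3)
    by (intro closure_contains_Inf) auto
  then obtain s where s: "\<And>n. s n \<in> dist x ` M" and "s \<longlonglongrightarrow> d"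
    by (auto simp: closure_sequential)
  have "\<forall>n. \<exists>y\<in>M. s n = norm (x - y)" using s by (auto simp: dist_norm)
  then obtain m where mM: "\<And>n. m n \<in> M" and "s = (\<lambda>n. norm (x - m n))" by metis
  with \<open>s \<longlonglongrightarrow> d\<close> have lim: "(\<lambda>n. norm (x - m n)) \<longlonglongrightarrow> d" by simp
  define a where "a n = 2 * ((norm (x - m n))\<^sup>2 - d\<^sup>2)" for n
  have "a \<longlonglongrightarrow> 2 * (d\<^sup>2 - d\<^sup>2)"
    unfolding a_def by (intro tendsto_intros lim)
  moreover have "(dist (m i) (m j))\<^sup>2 \<le> a i + a j" for i j
  proof -
    have "(1/2) *\<^sub>R m i + (1/2) *\<^sub>R m j \<in> M"
      by (intro convexD assms(2) mM) auto
    then have "d \<le> norm (x - (1/2) *\<^sub>R (m i + m j))"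
      by (simp add: d_le scaleR_add_right)
    from norm_diff_sq_le_midpoint[OF this \<open>d \<ge> 0\<close>] show ?thesis
      by (simp add: a_def dist_norm)
  qed
  ultimately have "Cauchy m" by (intro Cauchy_if_dist_sq_le[of a]) simp_all
  then obtain p where p: "m \<longlonglongrightarrow> p" using Cauchy_convergent_iff convergent_def by blast
  have "p \<in> M" using closed_sequentially[OF assms(1) _ p] mM by blast
  moreover have "norm (x - p) = d"
    using LIMSEQ_unique[OF tendsto_norm[OF tendsto_diff[OF tendsto_const p]] lim] .
  ultimately show ?thesis using that d_le by simp
qed

definition csubspace :: "'a::complex_hilbert set \<Rightarrow> bool" where
  "csubspace M \<longleftrightarrow> 0 \<in> M \<and> (\<forall>x\<in>M. \<forall>y\<in>M. x + y \<in> M) \<and> (\<forall>c. \<forall>x\<in>M. c *\<^sub>C x \<in> M)"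

lemma csubspace_0: "csubspace M \<Longrightarrow> 0 \<in> M"
  and csubspace_add: "csubspace M \<Longrightarrow> x \<in> M \<Longrightarrow> y \<in> M \<Longrightarrow> x + y \<in> M"
  and csubspace_scaleC: "csubspace M \<Longrightarrow> x \<in> M \<Longrightarrow> c *\<^sub>C x \<in> M"
  by (auto simp: csubspace_def)

lemma csubspace_diff: "csubspace M \<Longrightarrow> x \<in> M \<Longrightarrow> y \<in> M \<Longrightarrow> x - y \<in> M"
  using csubspace_add[of M x "(-1) *\<^sub>C y"] csubspace_scaleC[of M y "-1"]
  by (simp add: scaleC_minus1_left)

lemma csubspace_imp_convex: "csubspace M \<Longrightarrow> convex M"
  by (auto simp: convex_def scaleR_scaleC intro: csubspace_add csubspace_scaleC)

lemma orthogonal_projection_exists: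
  fixes M :: "'a::complex_hilbert set"
  assumes "closed M" and "csubspace M"
  obtains p where "p \<in> M" and "\<And>m. m \<in> M \<Longrightarrow> cinner (x - p) m = 0"
proof -
  obtain p where "p \<in> M" and closest: "\<And>m. m \<in> M \<Longrightarrow> norm (x - p) \<le> norm (x - m)"
    using closest_point_exists[OF assms(1) csubspace_imp_convex] csubspace_0 assms(2) by blast
  have "cinner (x - p) m = 0" if "m \<in> M" for m
  proof (rule ccontr)
    assume c: "cinner (x - p) m \<noteq> 0"
    then have "m \<noteq> 0" by auto
    define t where "t = cinner (x - p) m / of_real ((norm m)\<^sup>2)"
    have "p + t *\<^sub>C m \<in> M"
      using assms(2) \<open>p \<in> M\<close> that by (intro csubspace_add csubspace_scaleC)
    then have "norm (x - p) \<le> norm ((x - p) - t *\<^sub>C m)"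
      using closest by (simp add: algebra_simps)
    then have "(norm (x - p))\<^sup>2 \<le> (norm ((x - p) - t *\<^sub>C m))\<^sup>2" by (simp add: power_mono)
    moreover have "(norm ((x - p) - t *\<^sub>C m))\<^sup>2
        = (norm (x - p))\<^sup>2 - (cmod (cinner (x - p) m))\<^sup>2 / (norm m)\<^sup>2"
      unfolding t_def by (rule norm_diff_component_sq[OF \<open>m \<noteq> 0\<close>])
    ultimately have "(cmod (cinner (x - p) m))\<^sup>2 / (norm m)\<^sup>2 \<le> 0" by linarith
    with c \<open>m \<noteq> 0\<close> show False by (simp add: divide_le_0_iff)
  qed
  with \<open>p \<in> M\<close> show ?thesis using that by blast
qed

lemma Riesz_representation:
  fixes \<phi> :: "'a::complex_hilbert \<Rightarrow> complex"
  assumes "bounded_linear \<phi>" and \<phi>_scaleC: "\<And>c x. \<phi> (c *\<^sub>C x) = c * \<phi> x"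
  obtains y where "\<And>x. \<phi> x = cinner x y"
proof (cases "\<forall>x. \<phi> x = 0")
  case True
  then show ?thesis using that[of 0] by simp
next
  case False
  then obtain x0 where "\<phi> x0 \<noteq> 0" by blast
  interpret \<phi>: bounded_linear \<phi> by fact
  define K where "K = {x. \<phi> x = 0}"
  have "closed K" unfolding K_def
    by (intro closed_Collect_eq linear_continuous_on assms(1) continuous_on_const)
  moreover have "csubspace K"
    by (auto simp: csubspace_def K_def \<phi>.add \<phi>_scaleC)
  ultimately obtain p where "p \<in> K" and orth: "\<And>m. m \<in> K \<Longrightarrow> cinner (x0 - p) m = 0"
    using orthogonal_projection_exists by blast
  define v where "v = x0 - p"
  have "\<phi> v \<noteq> 0" using \<open>p \<in> K\<close> \<open>\<phi> x0 \<noteq> 0\<close> by (simp add: v_def K_def \<phi>.diff)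
  then have "cinner v v \<noteq> 0" by (auto simp: \<phi>.zero)
  have "\<phi> x = cinner x (cnj (\<phi> v / cinner v v) *\<^sub>C v)" for x
  proof -
    have "\<phi> x *\<^sub>C v - \<phi> v *\<^sub>C x \<in> K"
      by (simp add: K_def \<phi>.diff \<phi>_scaleC mult.commute)
    then have "cinner v (\<phi> x *\<^sub>C v - \<phi> v *\<^sub>C x) = 0" using orth by (simp add: v_def)
    then have "cnj (\<phi> x) * cinner v v = cnj (\<phi> v) * cinner v x"
      by (simp add: cinner_diff_right cinner_scaleC_right)
    then have "\<phi> x * cinner v v = \<phi> v * cinner x v"
      using cinner_commute[of v v] cinner_commute[of x v]
      by (metis complex_cnj_cnj complex_cnj_mult)
    with \<open>cinner v v \<noteq> 0\<close> show ?thesis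
      by (simp add: cinner_scaleC_right field_simps)
  qed
  then show ?thesis using that by blast
qed

section \<open>Linear relations\<close>

instantiation prod :: (complex_hilbert, complex_hilbert) complex_hilbert
begin

definition scaleC_prod_def: "c *\<^sub>C p = (c *\<^sub>C fst p, c *\<^sub>C snd p)"

definition cinner_prod_def: "cinner p q = cinner (fst p) (fst q) + cinner (snd p) (snd q)"

instance proof
  fix a b :: complex and x y z :: "'a \<times> 'b" and r :: real
  show "a *\<^sub>C (x + y) = a *\<^sub>C x + a *\<^sub>C y" by (simp add: scaleC_prod_def scaleC_add_right)
  show "(a + b) *\<^sub>C x = a *\<^sub>C x + b *\<^sub>C x" by (simp add: scaleC_prod_def scaleC_add_left)
  show "a *\<^sub>C b *\<^sub>C x = (a * b) *\<^sub>C x" by (simp add: scaleC_prod_def scaleC_scaleC)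
  show "1 *\<^sub>C x = x" by (simp add: scaleC_prod_def scaleC_one)
  show "r *\<^sub>R x = complex_of_real r *\<^sub>C x"
    by (simp add: scaleC_prod_def scaleR_prod_def scaleR_scaleC)
  show "cinner (x + y) z = cinner x z + cinner y z" by (simp add: cinner_prod_def cinner_add_left)
  show "cinner (a *\<^sub>C x) y = a * cinner x y"
    by (simp add: cinner_prod_def scaleC_prod_def cinner_scaleC_left algebra_simps)
  show "cinner x y = cnj (cinner y x)"
    by (simp add: cinner_prod_def cinner_commute[of "fst x"] cinner_commute[of "snd x"])
  show "norm x = sqrt (Re (cinner x x))"
    by (simp add: cinner_prod_def norm_prod_def cinner_self)
qed

end

lemma scaleC_Pair [simp]: "c *\<^sub>C (a, b) = (c *\<^sub>C a, c *\<^sub>C b)"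
  by (simp add: scaleC_prod_def)

lemma cinner_Pair: "cinner (a, b) (c, d) = cinner a c + cinner b d"
  by (simp add: cinner_prod_def)

lemma lin_rel_iff_csubspace: "lin_rel T \<longleftrightarrow> csubspace T"
  by (force simp: lin_rel_def csubspace_def zero_prod_def)

lemma rel_adj_antimono: "S \<subseteq> T \<Longrightarrow> rel_adj T \<subseteq> rel_adj S"
  by (auto simp: rel_adj_def)

lemma rel_adj_closure: "rel_adj (closure T) = rel_adj T"
proof
  show "rel_adj (closure T) \<subseteq> rel_adj T" by (intro rel_adj_antimono closure_subset)
  show "rel_adj T \<subseteq> rel_adj (closure T)"
  proof (clarify)
    fix f f' assume "(f, f') \<in> rel_adj T"
    define C where "C = {p. cinner f' (fst p) = cinner f (snd p)}"
    have "closed C" unfolding C_def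
      by (intro closed_Collect_eq linear_continuous_on bounded_linear_compose[OF bounded_linear_cinner_right]
          bounded_linear_fst bounded_linear_snd)
    moreover have "T \<subseteq> C" using \<open>(f, f') \<in> rel_adj T\<close> by (auto simp: C_def rel_adj_def)
    ultimately have "closure T \<subseteq> C" by (rule closure_minimal[rotated])
    then show "(f, f') \<in> rel_adj (closure T)" by (auto simp: C_def rel_adj_def)
  qed
qed

lemma rel_adj_rel_adj_subset:
  fixes A :: "('a::complex_hilbert \<times> 'b::complex_hilbert) set"
  assumes "lin_rel A" and "closed A"
  shows "rel_adj (rel_adj A) \<subseteq> A"
proof clarify
  fix x x' assume x: "(x, x') \<in> rel_adj (rel_adj A)"
  obtain p where "p \<in> A" and orth: "\<And>g. g \<in> A \<Longrightarrow> cinner ((x, x') - p) g = 0"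
    using orthogonal_projection_exists[OF assms(2)] assms(1) unfolding lin_rel_iff_csubspace by blast
  obtain p1 p2 where p: "p = (p1, p2)" by fastforce
  define r where "r = x - p1"
  define r' where "r' = x' - p2"
  \<comment> \<open>x - p is orthogonal to A, so its rotation (r', -r) lies in the adjoint\<close>
  have "(r', - r) \<in> rel_adj A"
    unfolding rel_adj_def
  proof (simp only: mem_Collect_eq prod.case, intro allI impI)
    fix g g' assume "(g, g') \<in> A"
    then have "cinner r g + cinner r' g' = 0"
      using orth[of "(g, g')"] by (simp add: p r_def r'_def cinner_Pair)
    then show "cinner (- r) g = cinner r' g'"
      by (simp add: cinner_minus_left add_eq_0_iff)
  qed
  then have "cinner x' r' = cinner x (- r)" and "cinner p2 r' = cinner p1 (- r)"
    using x \<open>p \<in> A\<close> cinner_commute[of p2 r'] cinner_commute[of p1 "- r"]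
    by (auto simp: rel_adj_def p)
  then have "cinner r' r' = cinner r (- r)"
    by (simp add: r_def r'_def cinner_diff_left del: cinner_minus_right)
  then have "cinner r' r' = - cinner r r" by (simp add: cinner_minus_right)
  then have "complex_of_real ((norm r')\<^sup>2 + (norm r)\<^sup>2) = 0"
    by (simp only: cinner_self of_real_add flip: eq_neg_iff_add_eq_0)
  then have "(norm r')\<^sup>2 + (norm r)\<^sup>2 = 0" by (simp only: of_real_eq_0_iff)
  then have "r = 0" and "r' = 0" by (simp_all add: add_nonneg_eq_0_iff)
  then show "(x, x') \<in> A" using \<open>p \<in> A\<close> by (simp add: p r_def r'_def)
qed

lemma selfadjoint_shift_cnj_surj:
  assumes "selfadjoint_rel T" and "z \<in> resolvent_set T"
  obtains f g where "(f, g) \<in> T" and "g - cnj z *\<^sub>C f = h"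
proof -
  obtain B where graph: "rel_inv (rel_shift T z) = {(x, B x) | x. True}"
    and "bounded_linear B" and B_scaleC: "\<And>c x. B (c *\<^sub>C x) = c *\<^sub>C B x"
    using assms(2) unfolding resolvent_set_def by blast
  have B_eq: "B (g - z *\<^sub>C f) = f" if "(f, g) \<in> T" for f g
  proof -
    have "(g - z *\<^sub>C f, f) \<in> rel_inv (rel_shift T z)"
      using that by (auto simp: rel_inv_def rel_shift_def)
    then show ?thesis by (simp add: graph)
  qed
  obtain y where y: "\<And>x. cinner (B x) h = cinner x y"
    using Riesz_representation[of "\<lambda>x. cinner (B x) h"]
      bounded_linear_compose[OF bounded_linear_cinner_left \<open>bounded_linear B\<close>]
    by (auto simp: B_scaleC cinner_scaleC_left)
  have "(y, h + cnj z *\<^sub>C y) \<in> rel_adj T"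
  proof (clarsimp simp: rel_adj_def)
    fix f f' assume "(f, f') \<in> T"
    have "cinner h f = cinner y (f' - z *\<^sub>C f)"
      using y[of "f' - z *\<^sub>C f"] B_eq[OF \<open>(f, f') \<in> T\<close>] cinner_commute[of h f]
        cinner_commute[of y "f' - z *\<^sub>C f"] by simp
    then show "cinner (h + cnj z *\<^sub>C y) f = cinner y f'"
      by (simp add: cinner_simps)
  qed
  then show ?thesis
    using that[of y "h + cnj z *\<^sub>C y"] assms(1) by (simp add: selfadjoint_rel_def)
qed

lemma resolvent_set_eigenvector_eq_0:
  assumes "z \<in> resolvent_set T" and "(f, z *\<^sub>C f) \<in> T"
  shows "f = 0"
proof -
  obtain B where graph: "rel_inv (rel_shift T z) = {(x, B x) | x. True}"
    and "bounded_linear B"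
    using assms(1) unfolding resolvent_set_def by blast
  have "(0, f) \<in> rel_inv (rel_shift T z)"
    using assms(2) unfolding rel_inv_def rel_shift_def by force
  then show ?thesis
    using linear_simps(3)[OF \<open>bounded_linear B\<close>] by (simp add: graph)
qed

section \<open>AB-generalized boundary triples\<close>

definition clinear_on :: "'a::complex_hilbert set \<Rightarrow> ('a \<Rightarrow> 'b::complex_hilbert) \<Rightarrow> bool" where
  "clinear_on S G \<longleftrightarrow> (\<forall>p\<in>S. \<forall>q\<in>S. G (p + q) = G p + G q) \<and> (\<forall>c. \<forall>p\<in>S. G (c *\<^sub>C p) = c *\<^sub>C G p)"

lemma clinear_on_diff:
  assumes "csubspace S" and "clinear_on S G" and "p \<in> S" and "q \<in> S"
  shows "G (p - q) = G p - G q"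
proof -
  have "G (p + (-1) *\<^sub>C q) = G p + (-1) *\<^sub>C G q"
    using assms by (simp add: clinear_on_def csubspace_scaleC)
  then show ?thesis by (simp add: scaleC_minus1_left)
qed

locale AB_boundary_triple =
  fixes A D :: "('h::complex_hilbert \<times> 'h) set"
    and G0 G1 :: "'h \<times> 'h \<Rightarrow> 'k::complex_hilbert"
  assumes lin_rel_A: "lin_rel A" and closed_A: "closed A"
    and boundary_triple: "AB_gen_boundary_triple A D G0 G1"
begin

abbreviation A0 :: "('h \<times> 'h) set" where "A0 \<equiv> {fh \<in> D. G0 fh = 0}"

lemma csubspace_D: "csubspace D"
  using boundary_triple by (simp add: AB_gen_boundary_triple_def lin_rel_iff_csubspace)

lemma clinear_on_G0: "clinear_on D G0" and clinear_on_G1: "clinear_on D G1"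
  using boundary_triple by (auto simp: AB_gen_boundary_triple_def clinear_on_def)

lemma G0_diff: "p \<in> D \<Longrightarrow> q \<in> D \<Longrightarrow> G0 (p - q) = G0 p - G0 q"
  and G1_diff: "p \<in> D \<Longrightarrow> q \<in> D \<Longrightarrow> G1 (p - q) = G1 p - G1 q"
  by (simp_all add: clinear_on_diff[OF csubspace_D] clinear_on_G0 clinear_on_G1)

lemma Green_identity:
  "(f, f') \<in> D \<Longrightarrow> (g, g') \<in> D \<Longrightarrow>
    cinner f' g - cinner f g' = cinner (G1 (f, f')) (G0 (g, g')) - cinner (G0 (f, f')) (G1 (g, g'))"
  using boundary_triple by (simp add: AB_gen_boundary_triple_def)

lemma selfadjoint_A0: "selfadjoint_rel A0"
  using boundary_triple by (simp add: AB_gen_boundary_triple_def)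

lemma kernel_Gamma_subset:
  assumes "p \<in> D" and "G0 p = 0" and "G1 p = 0"
  shows "p \<in> A"
proof -
  have "p \<in> rel_adj D"
    using assms Green_identity by (cases p) (fastforce simp: rel_adj_def)
  also have "rel_adj D = rel_adj (closure D)" by (simp add: rel_adj_closure)
  also have "\<dots> \<subseteq> rel_adj (rel_adj A)"
    using boundary_triple by (intro rel_adj_antimono) (simp add: AB_gen_boundary_triple_def)
  also have "\<dots> \<subseteq> A" by (rule rel_adj_rel_adj_subset[OF lin_rel_A closed_A])
  finally show ?thesis .
qed

lemma defect_difference:
  assumes "(a, a') \<in> D" and "(d, d') \<in> D" and "a' - w *\<^sub>C a = d' - w *\<^sub>C d"
  shows "(d - a, w *\<^sub>C (d - a)) \<in> D"
    and "G0 (d - a, w *\<^sub>C (d - a)) = G0 (d, d') - G0 (a, a')"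
    and "G1 (d - a, w *\<^sub>C (d - a)) = G1 (d, d') - G1 (a, a')"
proof -
  have eq: "(d - a, w *\<^sub>C (d - a)) = (d, d') - (a, a')"
    using assms(3) by (simp add: scaleC_diff_right algebra_simps)
  show "(d - a, w *\<^sub>C (d - a)) \<in> D"
    unfolding eq using csubspace_D assms(2,1) by (rule csubspace_diff)
  show "G0 (d - a, w *\<^sub>C (d - a)) = G0 (d, d') - G0 (a, a')"
    unfolding eq by (rule G0_diff[OF assms(2,1)])
  show "G1 (d - a, w *\<^sub>C (d - a)) = G1 (d, d') - G1 (a, a')"
    unfolding eq by (rule G1_diff[OF assms(2,1)])
qed

lemma gamma_field_single_valued:
  assumes "z \<in> resolvent_set A0"
    and "(w, y) \<in> gamma_field D G0 z" and "(w, y') \<in> gamma_field D G0 z"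
  shows "y = y'"
proof -
  have "(y, z *\<^sub>C y) \<in> D" "(y', z *\<^sub>C y') \<in> D" "G0 (y, z *\<^sub>C y) = G0 (y', z *\<^sub>C y')"
    using assms(2,3) by (auto simp: gamma_field_def)
  then have "(y - y', z *\<^sub>C (y - y')) \<in> A0"
    using defect_difference[of y' "z *\<^sub>C y'" y "z *\<^sub>C y" z] by simp
  then have "y - y' = 0" by (rule resolvent_set_eigenvector_eq_0[OF assms(1)])
  then show ?thesis by simp
qed

end

locale AB_boundary_triple_resolvent = AB_boundary_triple +
  fixes z :: complex and B
  assumes z_resolvent: "z \<in> resolvent_set {fh \<in> D. G0 fh = 0}"
    and resolvent_graph: "rel_inv (rel_shift {fh \<in> D. G0 fh = 0} z) = {(x, B x) | x. True}"
begin

lemma resolvent_in_A0: "(B h, h + z *\<^sub>C B h) \<in> A0"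
proof -
  have "(h, B h) \<in> rel_inv (rel_shift A0 z)" by (simp add: resolvent_graph)
  then obtain g where "(B h, g) \<in> A0" and "h = g - z *\<^sub>C B h"
    by (auto simp: rel_inv_def rel_shift_def)
  then show ?thesis by (metis diff_add_cancel)
qed

lemma resolvent_in_D: "(B h, h + z *\<^sub>C B h) \<in> D"
  and G0_resolvent: "G0 (B h, h + z *\<^sub>C B h) = 0"
  using resolvent_in_A0 by simp_all

lemma G1_resolvent_cinner:
  assumes "(q, cnj z *\<^sub>C q) \<in> D"
  shows "cinner (G1 (B h, h + z *\<^sub>C B h)) (G0 (q, cnj z *\<^sub>C q)) = cinner h q"
  using Green_identity[OF resolvent_in_D assms, of h] by (simp add: G0_resolvent cinner_simps)

lemma rel_adj_gamma_field_iff: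
  "(h, u) \<in> rel_adj (gamma_field D G0 (cnj z)) \<longleftrightarrow> u = G1 (B h, h + z *\<^sub>C B h)"
proof
  assume hu: "(h, u) \<in> rel_adj (gamma_field D G0 (cnj z))"
  have "cinner (u - G1 (B h, h + z *\<^sub>C B h)) w = 0" if "w \<in> G0 ` D" for w
  proof -
    obtain d d' where dD: "(d, d') \<in> D" and w: "w = G0 (d, d')" using \<open>w \<in> G0 ` D\<close> by auto
    obtain a a' where "(a, a') \<in> A0" and "a' - cnj z *\<^sub>C a = d' - cnj z *\<^sub>C d"
      using selfadjoint_shift_cnj_surj[OF selfadjoint_A0 z_resolvent] by metis
    with dD have qD: "(d - a, cnj z *\<^sub>C (d - a)) \<in> D"
      and G0q: "G0 (d - a, cnj z *\<^sub>C (d - a)) = w"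
      using defect_difference[of a a' d d' "cnj z"] w by auto
    then have "(w, d - a) \<in> gamma_field D G0 (cnj z)"
      unfolding G0q[symmetric] gamma_field_def by blast
    then have "cinner u w = cinner h (d - a)" using hu by (simp add: rel_adj_def)
    then show ?thesis
      using G1_resolvent_cinner[OF qD, of h] by (simp add: G0q cinner_diff_left)
  qed
  then have "u - G1 (B h, h + z *\<^sub>C B h) = 0"
    using boundary_triple by (intro cinner_eq_0_if_dense) (auto simp: AB_gen_boundary_triple_def)
  then show "u = G1 (B h, h + z *\<^sub>C B h)" by simp
next
  assume "u = G1 (B h, h + z *\<^sub>C B h)"
  then show "(h, u) \<in> rel_adj (gamma_field D G0 (cnj z))"
    by (auto simp: rel_adj_def gamma_field_def G1_resolvent_cinner)
qed

abbreviation Gamma_image where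
  "Gamma_image T \<equiv> {(G0 fh, G1 fh) | fh. fh \<in> T}"

abbreviation Krein_resolvent where
  "Krein_resolvent T \<equiv> lrel_sum (rel_inv (rel_shift A0 z))
      (rel_mult (gamma_field D G0 z)
        (rel_mult (rel_inv (rel_diff (Gamma_image T) (weyl_fun D G0 G1 z)))
          (rel_adj (gamma_field D G0 (cnj z)))))"

lemma resolvent_subset_Krein_resolvent:
  assumes "T \<subseteq> D"
  shows "rel_inv (rel_shift T z) \<subseteq> Krein_resolvent T"
proof clarify
  fix h f assume "(h, f) \<in> rel_inv (rel_shift T z)"
  then obtain f' where fT: "(f, f') \<in> T" and h: "h = f' - z *\<^sub>C f"
    by (auto simp: rel_inv_def rel_shift_def)
  define y where "y = f - B h"
  have "(h + z *\<^sub>C B h) - z *\<^sub>C B h = f' - z *\<^sub>C f" by (simp add: h)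
  from defect_difference[OF resolvent_in_D _ this] fT assms
  have yD: "(y, z *\<^sub>C y) \<in> D" and G0y: "G0 (f, f') = G0 (y, z *\<^sub>C y)"
    and G1y: "G1 (B h, h + z *\<^sub>C B h) = G1 (f, f') - G1 (y, z *\<^sub>C y)"
    by (auto simp: y_def G0_resolvent)
  have "(G0 (f, f'), G1 (f, f')) \<in> Gamma_image T" using fT by blast
  moreover have "(G0 (f, f'), G1 (y, z *\<^sub>C y)) \<in> weyl_fun D G0 G1 z"
    unfolding G0y weyl_fun_def using yD by blast
  ultimately have "(G0 (f, f'), G1 (B h, h + z *\<^sub>C B h))
      \<in> rel_diff (Gamma_image T) (weyl_fun D G0 G1 z)"
    unfolding G1y rel_diff_def by blast
  moreover have "(h, G1 (B h, h + z *\<^sub>C B h)) \<in> rel_adj (gamma_field D G0 (cnj z))"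
    by (simp add: rel_adj_gamma_field_iff)
  moreover have "(G0 (f, f'), y) \<in> gamma_field D G0 z"
    unfolding G0y gamma_field_def using yD by blast
  ultimately have "(h, y) \<in> rel_mult (gamma_field D G0 z)
      (rel_mult (rel_inv (rel_diff (Gamma_image T) (weyl_fun D G0 G1 z)))
        (rel_adj (gamma_field D G0 (cnj z))))"
    unfolding rel_mult_def rel_inv_def by blast
  moreover have "(h, B h) \<in> rel_inv (rel_shift A0 z)" by (simp add: resolvent_graph)
  ultimately have "(h, B h + y) \<in> Krein_resolvent T" unfolding lrel_sum_def by blast
  then show "(h, f) \<in> Krein_resolvent T" by (simp add: y_def)
qed

lemma Krein_resolvent_subset_resolvent:
  assumes "lin_rel T" and "A \<subseteq> T" and "T \<subseteq> D"
  shows "Krein_resolvent T \<subseteq> rel_inv (rel_shift T z)"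
proof clarify
  fix h f assume "(h, f) \<in> Krein_resolvent T"
  then obtain y w u where f: "f = B h + y" and wy: "(w, y) \<in> gamma_field D G0 z"
    and hu: "(h, u) \<in> rel_adj (gamma_field D G0 (cnj z))"
    and wu: "(w, u) \<in> rel_diff (Gamma_image T) (weyl_fun D G0 G1 z)"
    unfolding lrel_sum_def rel_mult_def resolvent_graph unfolding rel_inv_def by blast
  from wu obtain g k1 where u: "u = g - k1" and "(w, g) \<in> Gamma_image T"
    and "(w, k1) \<in> weyl_fun D G0 G1 z"
    unfolding rel_diff_def by blast
  then obtain p x where pT: "p \<in> T" and xD: "(x, z *\<^sub>C x) \<in> D"
    and w: "w = G0 p" "w = G0 (x, z *\<^sub>C x)" and g: "g = G1 p" and k1: "k1 = G1 (x, z *\<^sub>C x)"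
    unfolding weyl_fun_def by blast
  have "(w, x) \<in> gamma_field D G0 z" unfolding w(2) gamma_field_def using xD by blast
  with wy have "x = y" using gamma_field_single_valued[OF z_resolvent] by blast
  have u': "u = G1 (B h, h + z *\<^sub>C B h)" using hu by (simp add: rel_adj_gamma_field_iff)
  define k where "k = p - (B h, h + z *\<^sub>C B h) - (y, z *\<^sub>C y)"
  have pD: "p \<in> D" using pT assms(3) by blast
  have pRD: "p - (B h, h + z *\<^sub>C B h) \<in> D"
    using csubspace_D pD resolvent_in_D by (rule csubspace_diff)
  have yD: "(y, z *\<^sub>C y) \<in> D" using xD \<open>x = y\<close> by simp
  have "k \<in> D" unfolding k_def using csubspace_D pRD yD by (rule csubspace_diff)
  moreover have "G0 k = 0"
    using G0_diff[OF pRD yD] G0_diff[OF pD resolvent_in_D] w \<open>x = y\<close>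
    by (simp add: k_def G0_resolvent)
  moreover have "G1 k = 0"
    using G1_diff[OF pRD yD] G1_diff[OF pD resolvent_in_D] u u' g k1 \<open>x = y\<close>
    by (simp add: k_def)
  ultimately have "k \<in> T" using kernel_Gamma_subset assms(2) by blast
  then have "p - k \<in> T"
    using pT assms(1) by (simp add: lin_rel_iff_csubspace csubspace_diff)
  moreover have "p - k = (B h, h + z *\<^sub>C B h) + (y, z *\<^sub>C y)"
    by (simp add: k_def)
  moreover have "\<dots> = (f, h + z *\<^sub>C f)" by (simp add: f scaleC_add_right)
  ultimately have "(f, (h + z *\<^sub>C f) - z *\<^sub>C f) \<in> rel_shift T z"
    unfolding rel_shift_def by (metis (mono_tags, lifting) mem_Collect_eq)
  then show "(h, f) \<in> rel_inv (rel_shift T z)" by (simp add: rel_inv_def)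
qed

end

theorem mainTheorem7:
  fixes A A\<Theta> D :: "('h::complex_hilbert \<times> 'h) set"
    and G0 G1 :: "'h \<times> 'h \<Rightarrow> 'k::complex_hilbert"
    and z :: complex
  assumes "lin_rel A" and "closed A" and "symmetric_rel A"
    and "AB_gen_boundary_triple A D G0 G1"
    and "lin_rel A\<Theta>" and "A \<subseteq> A\<Theta>" and "A\<Theta> \<subseteq> D"
    and "z \<in> resolvent_set {fh \<in> D. G0 fh = 0}"
  shows "rel_inv (rel_shift A\<Theta> z) =
    lrel_sum (rel_inv (rel_shift {fh \<in> D. G0 fh = 0} z))
      (rel_mult (gamma_field D G0 z)
        (rel_mult (rel_inv (rel_diff {(G0 fh, G1 fh) | fh. fh \<in> A\<Theta>} (weyl_fun D G0 G1 z)))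
          (rel_adj (gamma_field D G0 (cnj z)))))"
proof -
  obtain B where "rel_inv (rel_shift {fh \<in> D. G0 fh = 0} z) = {(x, B x) | x. True}"
    using assms(8) unfolding resolvent_set_def by blast
  then interpret AB_boundary_triple_resolvent A D G0 G1 z B
    using assms(1,2,4,8) by unfold_locales
  show ?thesis
    using resolvent_subset_Krein_resolvent[OF assms(7)]
      Krein_resolvent_subset_resolvent[OF assms(5-7)] by (rule subset_antisym)
qed

end
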